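(* Let $K$ be a field, $A=K(x)[[y]]$ the algebra of formal power series in $y$ with coefficients in $K(x)$, and let $p,q$ be mutually prime positive integers. Suppose $P,Q\in A$ satisfy $P^p=Q^q$. For $n\geq0$ let $P_n,Q_n$ be the truncations of $P,Q$ to degree $n$ in $y$, and let $\omega=pQ_n\,dP_n-qP_n\,dQ_n$. Then $\omega$ is divisible by $y^n$, and the reduced rational differential one-form $\omega_{red}=\omega/y^n$ is of degree $n$ with respect to $y$ and vanishes along the line $\{y=0\}$.
   Context: For $P=\sum_{i\geq0}a_i(x)y^i\in A$, its truncation is $P_n=\sum_{i=0}^n a_i(x)y^i\in K(x)[y]$. For a rational one-form $\omega=\alpha\,dx+\beta\,dy$ with $\alpha,\beta\in K(x)[y]$, its degree with respect to $y$ is $\deg_y\omega=\max\{\deg_y\alpha,\deg_y\beta+1\}$. Divisibility by $y^n$ means both $\alpha$ and $\beta$ are divisible by $y^n$ in $K(x)[y]$; vanishing along $\{y=0\}$ means the pullback of the form to the line $y=0$ is zero. *)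

theory Defs
  imports "HOL-Computational_Algebra.Computational_Algebra"
          "HOL-Computational_Algebra.Polynomial_FPS"
begin

text \<open>The rational function field K(x) is modelled as the fraction field
  of K[x], i.e. the type 'a poly fract.  The derivation d/dx on K(x) is the
  quotient rule applied to any representative a/b of a fraction
  (the result is independent of the representative).\<close>

definition ratfun_deriv :: "'a::field poly fract \<Rightarrow> 'a poly fract" where
  "ratfun_deriv f = (SOME g. \<exists>a b. b \<noteq> 0 \<and> f = Fract a b \<and>
      g = Fract (pderiv a * b - a * pderiv b) (b ^ 2))"

text \<open>A rational one-form alpha dx + beta dy with alpha, beta in K(x)[y] is
  represented by the pair (alpha, beta).  The differential of F in K(x)[y]:
  dF = (dF/dx) dx + (dF/dy) dy.\<close>

definition dx_part :: "'a::field poly fract poly \<Rightarrow> 'a poly fract poly" where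
  "dx_part F = map_poly ratfun_deriv F"

definition dy_part :: "'a::field poly fract poly \<Rightarrow> 'a poly fract poly" where
  "dy_part F = pderiv F"

text \<open>Degree in y of the one-form alpha dx + beta dy:
  max(deg alpha, deg beta + 1), with the zero polynomial having degree -infinity
  (encoded as -1 here; the zero form thus gets degree -1).\<close>

definition deg_y_form :: "'b::zero poly \<Rightarrow> 'b poly \<Rightarrow> int" where
  "deg_y_form \<alpha> \<beta> = max (if \<alpha> = 0 then -1 else int (degree \<alpha>))
                            (if \<beta> = 0 then -1 else int (degree \<beta>) + 1)"

text \<open>The form alpha dx + beta dy vanishes along {y = 0}: its pullback to the
  line y = 0 is alpha(x,0) dx, so the condition is alpha(x,0) = 0.\<close>

definition vanishes_on_y0 :: "'b::comm_semiring_0 poly \<Rightarrow> 'b poly \<Rightarrow> bool" where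
  "vanishes_on_y0 \<alpha> \<beta> \<longleftrightarrow> poly \<alpha> 0 = 0"

definition trunc_y :: "nat \<Rightarrow> 'b::zero fps \<Rightarrow> 'b poly" where
  "trunc_y n F = truncate_fps (Suc n) F"

end

theory Submission
  imports Defs
begin

text \<open>Applying any derivation D to \<open>P ^ p = Q ^ q\<close> and multiplying by PQ
  gives \<open>P ^ p * (p Q DP - q P DQ) = 0\<close>, so \<open>p Q DP - q P DQ = 0\<close> in the
  integral domain K(x)[[y]].  With
  D = d/dx and D = d/dy these are the two components of \<open>p Q dP - q P dQ\<close>.
  Truncation at degree n keeps the coefficients of order \<open>\<le> n\<close>; d/dx
  preserves this agreement and d/dy loses one order, hence \<open>y ^ (n + 1)\<close>
  divides \<open>\<alpha>\<close> and \<open>y ^ n\<close> divides \<open>\<beta>\<close>.  The surplus factor y of \<open>\<alpha>\<close> is the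
  vanishing on \<open>y = 0\<close>, and the degree bound follows from \<open>deg \<alpha> \<le> 2n\<close>,
  \<open>deg \<beta> < 2n\<close>.\<close>

lemma ratfun_deriv_Fract:
  fixes a b :: "'a::field poly"
  assumes "b \<noteq> 0"
  shows "ratfun_deriv (Fract a b) = Fract (pderiv a * b - a * pderiv b) (b ^ 2)"
  unfolding ratfun_deriv_def
proof (rule someI2_ex)
  show "\<exists>g a' b'. b' \<noteq> 0 \<and> Fract a b = Fract a' b' \<and>
          g = Fract (pderiv a' * b' - a' * pderiv b') (b' ^ 2)"
    using assms by blast
next
  fix g
  assume "\<exists>a' b'. b' \<noteq> 0 \<and> Fract a b = Fract a' b' \<and>
            g = Fract (pderiv a' * b' - a' * pderiv b') (b' ^ 2)"
  then obtain a' b' where b': "b' \<noteq> 0" and same: "Fract a b = Fract a' b'"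
    and g: "g = Fract (pderiv a' * b' - a' * pderiv b') (b' ^ 2)" by blast
  have cross: "a * b' = a' * b"
    using same assms b' by (simp add: eq_fract)
  have "pderiv a * b' + a * pderiv b' = pderiv a' * b + a' * pderiv b"
    using arg_cong[OF cross, of pderiv] by (simp add: pderiv_mult algebra_simps)
  with cross have "(pderiv a' * b' - a' * pderiv b') * b ^ 2 = (pderiv a * b - a * pderiv b) * b' ^ 2"
    by algebra
  then show "g = Fract (pderiv a * b - a * pderiv b) (b ^ 2)"
    using g assms b' by (simp add: eq_fract)
qed

lemma ratfun_deriv_add:
  "ratfun_deriv (f + g) = ratfun_deriv f + ratfun_deriv (g :: 'a::field poly fract)"
proof (cases f)
  case (Fract a b)
  show ?thesis
  proof (cases g)
    case (Fract c d)
    have "(pderiv (a * d + c * b) * (b * d) - (a * d + c * b) * pderiv (b * d)) * (b\<^sup>2 * d\<^sup>2) =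
      ((pderiv a * b - a * pderiv b) * d\<^sup>2 + (pderiv c * d - c * pderiv d) * b\<^sup>2) * (b * d)\<^sup>2"
      by (simp add: pderiv_mult pderiv_add algebra_simps power2_eq_square)
    with \<open>f = Fract a b\<close> \<open>b \<noteq> 0\<close> Fract show ?thesis
      by (simp add: ratfun_deriv_Fract eq_fract)
  qed
qed

lemma ratfun_deriv_mult:
  "ratfun_deriv (f * g) = ratfun_deriv f * g + f * ratfun_deriv (g :: 'a::field poly fract)"
proof (cases f)
  case (Fract a b)
  show ?thesis
  proof (cases g)
    case (Fract c d)
    have "(pderiv (a * c) * (b * d) - a * c * pderiv (b * d)) * (b\<^sup>2 * d * (b * d\<^sup>2)) =
      ((pderiv a * b - a * pderiv b) * c * (b * d\<^sup>2) + a * (pderiv c * d - c * pderiv d) * (b\<^sup>2 * d)) * (b * d)\<^sup>2"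
      by (simp add: pderiv_mult algebra_simps power2_eq_square)
    with \<open>f = Fract a b\<close> \<open>b \<noteq> 0\<close> Fract show ?thesis
      by (simp add: ratfun_deriv_Fract eq_fract)
  qed
qed

lemma ratfun_deriv_0 [simp]: "ratfun_deriv (0 :: 'a::field poly fract) = 0"
  using ratfun_deriv_Fract[of 1 0] by (simp add: Zero_fract_def)

lemma ratfun_deriv_sum:
  "ratfun_deriv (sum f A :: 'a::field poly fract) = (\<Sum>i\<in>A. ratfun_deriv (f i))"
  by (induction A rule: infinite_finite_induct) (auto simp: ratfun_deriv_add)

definition fps_dx :: "'a::field poly fract fps \<Rightarrow> 'a poly fract fps" where
  "fps_dx F = Abs_fps (\<lambda>i. ratfun_deriv (F $ i))"

lemma fps_dx_nth [simp]: "fps_dx F $ i = ratfun_deriv (F $ i)"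
  by (simp add: fps_dx_def)

lemma fps_dx_mult: "fps_dx (F * G) = fps_dx F * G + F * fps_dx G"
  by (rule fps_ext) (simp add: fps_mult_nth ratfun_deriv_sum ratfun_deriv_mult sum.distrib)

lemma fps_of_poly_of_nat: "fps_of_poly (of_nat k) = of_nat k"
  by (simp add: of_nat_poly fps_of_poly_const fps_of_nat)

lemma fps_of_poly_dx_part: "fps_of_poly (dx_part F) = fps_dx (fps_of_poly F)"
  by (rule fps_ext) (simp add: dx_part_def coeff_map_poly)

lemma derivation_power:
  fixes D :: "'b::comm_semiring_1 \<Rightarrow> 'b"
  assumes leibniz: "\<And>x y. D (x * y) = D x * y + x * D y"
  shows "D (x ^ Suc m) = of_nat (Suc m) * x ^ m * D x"
  by (induction m) (simp_all add: leibniz algebra_simps)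

lemma power_eq_power_imp_log_form_eq_0:
  fixes D :: "'b::idom \<Rightarrow> 'b"
  assumes leibniz: "\<And>x y. D (x * y) = D x * y + x * D y"
    and "p > 0" "q > 0" and powers: "P ^ p = Q ^ q"
  shows "of_nat p * Q * D P - of_nat q * P * D Q = 0"
proof -
  obtain p' q' where p: "p = Suc p'" and q: "q = Suc q'"
    using \<open>p > 0\<close> \<open>q > 0\<close> gr0_implies_Suc by metis
  have "of_nat p * P ^ p' * D P = D (P ^ p)"
    unfolding p by (rule derivation_power[OF leibniz, symmetric])
  also have "\<dots> = of_nat q * Q ^ q' * D Q"
    unfolding powers q by (rule derivation_power[OF leibniz])
  finally have derivs: "of_nat p * P ^ p' * D P = of_nat q * Q ^ q' * D Q" .
  have "P ^ p * (of_nat p * Q * D P) = P * Q * (of_nat p * P ^ p' * D P)"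
    by (simp add: p algebra_simps)
  also have "\<dots> = P * Q * (of_nat q * Q ^ q' * D Q)"
    by (simp only: derivs)
  also have "\<dots> = Q ^ q * (of_nat q * P * D Q)"
    by (simp add: q algebra_simps)
  finally have "P ^ p * (of_nat p * Q * D P - of_nat q * P * D Q) = 0"
    by (simp add: powers right_diff_distrib)
  moreover have "P = 0 \<and> Q = 0" if "P ^ p = 0"
  proof -
    have "Q ^ q = 0"
      using that powers by simp
    with that show ?thesis
      using \<open>p > 0\<close> \<open>q > 0\<close> by simp
  qed
  ultimately show ?thesis by auto
qed

definition fps_agree_below :: "nat \<Rightarrow> 'b fps \<Rightarrow> 'b fps \<Rightarrow> bool" where
  "fps_agree_below m F G \<longleftrightarrow> (\<forall>j<m. F $ j = G $ j)"

lemma fps_agree_below_refl: "fps_agree_below m F F"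
  by (simp add: fps_agree_below_def)

lemma fps_agree_below_mono: "fps_agree_below m F G \<Longrightarrow> k \<le> m \<Longrightarrow> fps_agree_below k F G"
  by (simp add: fps_agree_below_def)

lemma fps_agree_below_mult:
  fixes F F' G G' :: "'b::comm_ring_1 fps"
  assumes "fps_agree_below m F F'" "fps_agree_below m G G'"
  shows "fps_agree_below m (F * G) (F' * G')"
  using assms unfolding fps_agree_below_def fps_mult_nth by (intro allI impI sum.cong) auto

lemma fps_agree_below_diff:
  fixes F F' G G' :: "'b::comm_ring_1 fps"
  shows "fps_agree_below m F F' \<Longrightarrow> fps_agree_below m G G' \<Longrightarrow>
    fps_agree_below m (F - G) (F' - G')"
  by (simp add: fps_agree_below_def)

lemma fps_agree_below_deriv:
  "fps_agree_below (Suc m) F G \<Longrightarrow> fps_agree_below m (fps_deriv F) (fps_deriv G)"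
  by (simp add: fps_agree_below_def)

lemma fps_agree_below_dx: "fps_agree_below m F G \<Longrightarrow> fps_agree_below m (fps_dx F) (fps_dx G)"
  by (simp add: fps_agree_below_def)

lemma fps_agree_below_trunc_y: "fps_agree_below (Suc n) (fps_of_poly (trunc_y n F)) F"
  by (simp add: fps_agree_below_def trunc_y_def)

lemma monom_1_dvd_iff_fps_agree_below_0:
  "monom 1 m dvd X \<longleftrightarrow> fps_agree_below m (fps_of_poly X) 0"
  by (simp add: fps_agree_below_def monom_1_dvd_iff')

definition deg_less :: "nat \<Rightarrow> 'b::zero poly \<Rightarrow> bool" where
  "deg_less m X \<longleftrightarrow> (\<forall>k\<ge>m. coeff X k = 0)"

lemma deg_less_iff: "deg_less m X \<longleftrightarrow> X = 0 \<or> degree X < m"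
proof
  assume "deg_less m X"
  then show "X = 0 \<or> degree X < m"
    unfolding deg_less_def using leading_coeff_0_iff not_le by blast
qed (auto simp: deg_less_def coeff_eq_0)

lemma deg_less_mono: "deg_less a X \<Longrightarrow> a \<le> b \<Longrightarrow> deg_less b X"
  by (simp add: deg_less_def)

text \<open>The bound is stated with \<open>a + b - 1\<close> so that it also holds for
  \<open>a = 0\<close> or \<open>b = 0\<close>, where one factor is the zero polynomial.\<close>

lemma deg_less_mult:
  fixes X Y :: "'b::comm_semiring_1 poly"
  assumes "deg_less a X" "deg_less b Y"
  shows "deg_less (a + b - 1) (X * Y)"
  unfolding deg_less_def coeff_mult
proof (intro allI impI sum.neutral ballI)
  fix k i assume "a + b - 1 \<le> k" "i \<in> {..k}"
  then consider "a \<le> i" | "b \<le> k - i" by linarith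
  then show "coeff X i * coeff Y (k - i) = 0"
    using assms unfolding deg_less_def by cases simp_all
qed

lemma deg_less_diff: "deg_less a X \<Longrightarrow> deg_less a Y \<Longrightarrow> deg_less a (X - Y)"
  by (simp add: deg_less_def)

lemma deg_less_of_nat: "deg_less 1 (of_nat k :: 'b::comm_semiring_1 poly)"
  by (simp add: deg_less_def of_nat_poly coeff_pCons split: nat.split)

lemma deg_less_trunc_y: "deg_less (Suc n) (trunc_y n F)"
  by (simp add: deg_less_def trunc_y_def)

lemma deg_less_dx_part: "deg_less m X \<Longrightarrow> deg_less m (dx_part X)"
  by (simp add: deg_less_def dx_part_def coeff_map_poly)

lemma deg_less_dy_part: "deg_less (Suc m) X \<Longrightarrow> deg_less m (dy_part X)"
  by (simp add: deg_less_def dy_part_def coeff_pderiv)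

lemma coeff_div_monom_1:
  fixes X :: "'b::field poly"
  assumes "monom 1 n dvd X"
  shows "coeff (X div monom 1 n) k = coeff X (n + k)"
proof -
  obtain R where R: "X = monom 1 n * R"
    using assms by (auto simp: dvd_def)
  then have "X div monom 1 n = R"
    by simp
  then show ?thesis
    by (simp add: R coeff_monom_mult)
qed

lemma deg_less_div_monom_1:
  fixes X :: "'b::field poly"
  shows "monom 1 n dvd X \<Longrightarrow> deg_less (n + m) X \<Longrightarrow> deg_less m (X div monom 1 n)"
  by (simp add: deg_less_def coeff_div_monom_1)

lemma truncated_dx_form_dvd:
  fixes P Q :: "'a::field poly fract fps"
  assumes "p > 0" "q > 0" "P ^ p = Q ^ q"
  shows "monom 1 (Suc n) dvd of_nat p * trunc_y n Q * dx_part (trunc_y n P)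
                            - of_nat q * trunc_y n P * dx_part (trunc_y n Q)"
proof -
  have "of_nat p * Q * fps_dx P - of_nat q * P * fps_dx Q = 0"
    using fps_dx_mult assms by (rule power_eq_power_imp_log_form_eq_0)
  moreover have "fps_agree_below (Suc n)
      (fps_of_poly (of_nat p * trunc_y n Q * dx_part (trunc_y n P)
                    - of_nat q * trunc_y n P * dx_part (trunc_y n Q)))
      (of_nat p * Q * fps_dx P - of_nat q * P * fps_dx Q)"
    unfolding fps_of_poly_simps fps_of_poly_of_nat fps_of_poly_dx_part
    by (intro fps_agree_below_diff fps_agree_below_mult fps_agree_below_dx
        fps_agree_below_refl fps_agree_below_trunc_y)
  ultimately show ?thesis
    by (simp add: monom_1_dvd_iff_fps_agree_below_0)
qed

lemma truncated_dy_form_dvd: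
  fixes P Q :: "'a::field poly fract fps"
  assumes "p > 0" "q > 0" "P ^ p = Q ^ q"
  shows "monom 1 n dvd of_nat p * trunc_y n Q * dy_part (trunc_y n P)
                       - of_nat q * trunc_y n P * dy_part (trunc_y n Q)"
proof -
  have "of_nat p * Q * fps_deriv P - of_nat q * P * fps_deriv Q = 0"
    by (rule power_eq_power_imp_log_form_eq_0[OF _ assms]) (simp add: add.commute)
  moreover have "fps_agree_below n
      (fps_of_poly (of_nat p * trunc_y n Q * dy_part (trunc_y n P)
                    - of_nat q * trunc_y n P * dy_part (trunc_y n Q)))
      (of_nat p * Q * fps_deriv P - of_nat q * P * fps_deriv Q)"
    unfolding dy_part_def fps_of_poly_simps fps_of_poly_of_nat
    by (intro fps_agree_below_diff fps_agree_below_mult fps_agree_below_deriv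
        fps_agree_below_refl fps_agree_below_trunc_y
        fps_agree_below_mono[OF fps_agree_below_trunc_y]) simp_all
  ultimately show ?thesis
    by (simp add: monom_1_dvd_iff_fps_agree_below_0)
qed

lemma truncated_form_deg_less:
  fixes P Q :: "'a::field poly fract fps"
  shows "deg_less (n + Suc n) (of_nat p * trunc_y n Q * dx_part (trunc_y n P)
                               - of_nat q * trunc_y n P * dx_part (trunc_y n Q))"
    and "deg_less (n + n) (of_nat p * trunc_y n Q * dy_part (trunc_y n P)
                           - of_nat q * trunc_y n P * dy_part (trunc_y n Q))"
  by (auto intro!: deg_less_diff deg_less_mono[OF deg_less_mult[OF deg_less_mult]]
      deg_less_of_nat deg_less_dx_part deg_less_dy_part deg_less_trunc_y)

theorem mainTheorem9:
  fixes P Q :: "'a::field poly fract fps" and p q n :: nat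
  assumes "p > 0" and "q > 0" and "coprime p q"
    and "P ^ p = Q ^ q"
  defines "Pn \<equiv> trunc_y n P" and "Qn \<equiv> trunc_y n Q"
  defines "\<alpha> \<equiv> of_nat p * Qn * dx_part Pn - of_nat q * Pn * dx_part Qn"
    and "\<beta> \<equiv> of_nat p * Qn * dy_part Pn - of_nat q * Pn * dy_part Qn"
  shows "monom 1 n dvd \<alpha> \<and> monom 1 n dvd \<beta> \<and>
         (let \<alpha>r = \<alpha> div monom 1 n; \<beta>r = \<beta> div monom 1 n in
            deg_y_form \<alpha>r \<beta>r \<le> int n \<and> vanishes_on_y0 \<alpha>r \<beta>r)"
proof -
  have \<alpha>_dvd_Suc: "monom 1 (Suc n) dvd \<alpha>" and \<beta>_dvd: "monom 1 n dvd \<beta>"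
    unfolding \<alpha>_def \<beta>_def Pn_def Qn_def
    using truncated_dx_form_dvd truncated_dy_form_dvd assms(1,2,4) by blast+
  have \<alpha>_dvd: "monom 1 n dvd \<alpha>"
    using \<alpha>_dvd_Suc by (rule dvd_trans[rotated]) (simp add: monom_1_dvd_iff')
  have "deg_less (n + Suc n) \<alpha>" "deg_less (n + n) \<beta>"
    unfolding \<alpha>_def \<beta>_def Pn_def Qn_def by (rule truncated_form_deg_less)+
  then have "deg_less (Suc n) (\<alpha> div monom 1 n)" "deg_less n (\<beta> div monom 1 n)"
    using deg_less_div_monom_1 \<alpha>_dvd \<beta>_dvd by blast+
  moreover have "coeff (\<alpha> div monom 1 n) 0 = 0"
    using \<alpha>_dvd_Suc \<alpha>_dvd by (simp add: coeff_div_monom_1 monom_1_dvd_iff')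
  ultimately show ?thesis
    using \<alpha>_dvd \<beta>_dvd
    by (auto simp: deg_y_form_def vanishes_on_y0_def poly_0_coeff_0 deg_less_iff)
qed

end
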